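(* Let $\mathcal{H}$ be a Hilbert space of finite dimension $d\ge 2$, let $\mathcal{F}(\mathcal{H})\subseteq\mathcal{D}(\mathcal{H})$ be a closed set of free states, and let $\rho\in\mathcal{D}(\mathcal{H})\setminus\mathcal{F}(\mathcal{H})$. For $s>0$ and $m=2,\dots,d$ let $W_m(\rho,s)$ be Hermitian operators on $\mathcal{H}^{\otimes m}$ satisfying $\operatorname{tr}[W_m(\rho,s)\eta^{\otimes m}]=S_m\!\left(\frac{1+s}{s}\eta-\frac1s\rho\right)$ for all $\eta\in\mathcal{D}(\mathcal{H})$. If $0<s'<s$, then \[\{\eta\in\mathcal{D}(\mathcal{H}):\operatorname{tr}[W_m(\rho,s')\eta^{\otimes m}]\ge0\ \forall m=2,\dots,d\}\subsetneq\{\eta\in\mathcal{D}(\mathcal{H}):\operatorname{tr}[W_m(\rho,s)\eta^{\otimes m}]\ge0\ \forall m=2,\dots,d\}.\]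
   Context: $\mathcal{D}(\mathcal{H})$ is the set of density operators on $\mathcal{H}$. For a Hermitian operator $X$ on $\mathcal{H}$, define recursively $S_0(X)=1$ and $S_m(X)=\frac1m\sum_{l=1}^m(-1)^{l-1}\operatorname{tr}[X^l]\,S_{m-l}(X)$ for $m\ge1$. *)

theory Defs
  imports "Jordan_Normal_Form.Matrix" "Jordan_Normal_Form.Conjugate"
begin

text \<open>Operators on the m-fold tensor power are d^m x d^m
matrices, with the tensor product given by the Kronecker product.\<close>

definition mtrace :: "complex mat \<Rightarrow> complex" where
  "mtrace A = (\<Sum>i<dim_row A. A $$ (i, i))"

definition adjoint :: "complex mat \<Rightarrow> complex mat" where
  "adjoint A = mat (dim_col A) (dim_row A) (\<lambda>(i, j). cnj (A $$ (j, i)))"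

definition hermitian :: "nat \<Rightarrow> complex mat \<Rightarrow> bool" where
  "hermitian n A \<longleftrightarrow> A \<in> carrier_mat n n \<and> adjoint A = A"

definition positive_semidef :: "nat \<Rightarrow> complex mat \<Rightarrow> bool" where
  "positive_semidef n A \<longleftrightarrow> hermitian n A \<and>
     (\<forall>v \<in> carrier_vec n. 0 \<le> conjugate v \<bullet> (A *\<^sub>v v))"

definition density :: "nat \<Rightarrow> complex mat set" where
  "density d = {\<rho>. positive_semidef d \<rho> \<and> mtrace \<rho> = 1}"

definition kron :: "complex mat \<Rightarrow> complex mat \<Rightarrow> complex mat" where
  "kron A B = mat (dim_row A * dim_row B) (dim_col A * dim_col B)
     (\<lambda>(i, j). A $$ (i div dim_row B, j div dim_col B) * B $$ (i mod dim_row B, j mod dim_col B))"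

fun tensor_pow :: "complex mat \<Rightarrow> nat \<Rightarrow> complex mat" where
  "tensor_pow A 0 = 1\<^sub>m 1"
| "tensor_pow A (Suc m) = kron A (tensor_pow A m)"

function S :: "complex mat \<Rightarrow> nat \<Rightarrow> complex" where
  "S X 0 = 1"
| "S X (Suc m) = (1 / of_nat (Suc m)) *
     (\<Sum>l\<in>{1..Suc m}. (-1) ^ (l - 1) * mtrace (X ^\<^sub>m l) * S X (Suc m - l))"
  by pat_completeness auto
termination
  by (relation "measure snd") auto

text \<open>Closed subsets of the d x d complex matrices (finite-dimensional, so the
topology is that of entrywise convergence).\<close>
definition closed_mat_set :: "nat \<Rightarrow> complex mat set \<Rightarrow> bool" where
  "closed_mat_set d F \<longleftrightarrow>
     (\<forall>f A. (\<forall>n. f n \<in> F) \<longrightarrow> A \<in> carrier_mat d d \<longrightarrow>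
        (\<forall>i<d. \<forall>j<d. (\<lambda>n. f n $$ (i, j)) \<longlonglongrightarrow> A $$ (i, j)) \<longrightarrow> A \<in> F)"

end

theory Submission
  imports Defs "Jordan_Normal_Form.Schur_Decomposition" "Jordan_Normal_Form.Spectral_Radius"
    "HOL-Computational_Algebra.Polynomial_FPS"
begin

text \<open>Diagonalise a Hermitian \<open>X\<close> of trace one by a unitary. Newton's identities identify
  \<open>S\<^sub>m(X)\<close> with the \<open>m\<close>-th elementary symmetric function of its eigenvalues, and these are
  all nonnegative exactly when all eigenvalues are. So the hypothesis on \<open>W\<^sub>m(\<rho>, t)\<close> says that
  \<open>\<eta>\<close> passes all witness tests at \<open>t\<close> iff the extrapolation
  \<open>((1 + t) \<eta> - \<rho>) / t = \<eta> + (\<eta> - \<rho>) / t\<close> is positive semidefinite, a condition that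
  only weakens as \<open>t\<close> grows since \<open>\<eta>\<close> is positive semidefinite. The state \<open>\<eta> = (\<rho> + s \<sigma>) / (1 + s)\<close>,
  for a suitable pure state \<open>\<sigma>\<close>, separates the sets for \<open>s'\<close> and \<open>s\<close>.\<close>

subsection \<open>Newton's identities\<close>

definition esym_poly :: "(nat \<Rightarrow> real) \<Rightarrow> nat \<Rightarrow> real poly" where
  "esym_poly f n = (\<Prod>i<n. [:1, f i:])"

definition esym :: "(nat \<Rightarrow> real) \<Rightarrow> nat \<Rightarrow> nat \<Rightarrow> real" where
  "esym f n k = coeff (esym_poly f n) k"

definition power_sum :: "(nat \<Rightarrow> real) \<Rightarrow> nat \<Rightarrow> nat \<Rightarrow> real" where
  "power_sum f n l = (\<Sum>i<n. f i ^ l)"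

text \<open>\<open>X\<close> times the logarithmic derivative of \<open>1 + c X\<close>.\<close>
definition newton_series :: "real \<Rightarrow> real fps" where
  "newton_series c = Abs_fps (\<lambda>l. if l = 0 then 0 else - ((- c) ^ l))"

lemma newton_series_mult: "(1 + fps_const c * fps_X) * newton_series c = fps_const c * fps_X"
proof (rule fps_ext)
  fix l
  show "fps_nth ((1 + fps_const c * fps_X) * newton_series c) l = fps_nth (fps_const c * fps_X) l"
    by (cases l; cases "l - 1") (auto simp: newton_series_def algebra_simps fps_X_mult_nth)
qed

lemma fps_of_poly_esym_poly: "fps_of_poly (esym_poly f n) = (\<Prod>i<n. 1 + fps_const (f i) * fps_X)"
proof -
  have linear: "fps_of_poly [:1, c:] = 1 + fps_const c * fps_X" for c :: real
    by (rule fps_ext) (auto simp: coeff_pCons split: nat.split)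
  show ?thesis
    by (simp add: esym_poly_def fps_of_poly_prod linear)
qed

lemma fps_X_mult_deriv_esym_poly:
  "fps_X * fps_deriv (fps_of_poly (esym_poly f n)) =
     fps_of_poly (esym_poly f n) * (\<Sum>i<n. newton_series (f i))"
proof (induction n)
  case 0
  then show ?case by (simp add: fps_of_poly_esym_poly)
next
  case (Suc n)
  define E where "E = fps_of_poly (esym_poly f n)"
  define L where "L = 1 + fps_const (f n) * fps_X"
  have E_Suc: "fps_of_poly (esym_poly f (Suc n)) = E * L"
    by (simp add: fps_of_poly_esym_poly E_def L_def)
  have "fps_X * fps_deriv (E * L) = (fps_X * fps_deriv E) * L + E * (fps_const (f n) * fps_X)"
    by (simp add: L_def fps_deriv_mult algebra_simps)
  also have "\<dots> = E * L * (\<Sum>i<n. newton_series (f i)) + E * (L * newton_series (f n))"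
    unfolding Suc.IH [folded E_def] L_def newton_series_mult by (simp add: algebra_simps)
  also have "\<dots> = E * L * (\<Sum>i<Suc n. newton_series (f i))"
    by (simp add: algebra_simps)
  finally show ?case
    by (simp only: E_Suc)
qed

lemma fps_nth_sum_newton_series:
  "fps_nth (\<Sum>i<n. newton_series (f i)) l = (if l = 0 then 0 else (-1) ^ (l - 1) * power_sum f n l)"
  by (cases l) (simp_all add: fps_sum_nth newton_series_def power_sum_def sum_distrib_left
      power_minus' mult_ac)

lemma newton_identity:
  "of_nat (Suc m) * esym f n (Suc m) =
     (\<Sum>l = 1..Suc m. (-1) ^ (l - 1) * power_sum f n l * esym f n (Suc m - l))"
proof -
  define E where "E = fps_of_poly (esym_poly f n)"
  define P where "P = (\<Sum>i<n. newton_series (f i))"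
  have "of_nat (Suc m) * esym f n (Suc m) = fps_nth (fps_X * fps_deriv E) (Suc m)"
    by (simp add: fps_X_mult_nth E_def esym_def)
  also have "\<dots> = fps_nth (E * P) (Suc m)"
    by (simp add: E_def P_def fps_X_mult_deriv_esym_poly)
  also have "\<dots> = (\<Sum>l = 0..Suc m. fps_nth E l * fps_nth P (Suc m - l))"
    by (simp add: fps_mult_nth)
  also have "\<dots> = (\<Sum>l = 0..Suc m. fps_nth E (Suc m - l) * fps_nth P l)"
    by (subst sum.atLeastAtMost_rev) simp
  also have "\<dots> = (\<Sum>l = 1..Suc m. fps_nth E (Suc m - l) * fps_nth P l)"
    by (simp add: P_def fps_nth_sum_newton_series sum.atLeast_Suc_atMost)
  also have "\<dots> = (\<Sum>l = 1..Suc m. (-1) ^ (l - 1) * power_sum f n l * esym f n (Suc m - l))"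
    by (rule sum.cong) (auto simp: P_def fps_nth_sum_newton_series E_def esym_def)
  finally show ?thesis .
qed

subsection \<open>Signs of elementary symmetric functions\<close>

lemma poly_esym_poly: "poly (esym_poly f n) t = (\<Prod>i<n. 1 + f i * t)"
  by (simp add: esym_poly_def poly_prod mult.commute)

lemma esym_0 [simp]: "esym f n 0 = 1"
  by (simp add: esym_def poly_0_coeff_0 [symmetric] poly_esym_poly)

lemma degree_esym_poly: "degree (esym_poly f n) \<le> n"
proof -
  have "degree (esym_poly f n) \<le> (\<Sum>i<n. degree [:1, f i:])"
    unfolding esym_poly_def using degree_prod_sum_le[of "{..<n}" "\<lambda>i. [:1, f i:]"]
    by (simp add: o_def)
  also have "\<dots> \<le> n"
    using sum_mono[of "{..<n}" "\<lambda>i. degree [:1, f i:]" "\<lambda>_. 1"] by simp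
  finally show ?thesis .
qed

lemma esym_nonneg: "(\<And>i. i < n \<Longrightarrow> 0 \<le> f i) \<Longrightarrow> 0 \<le> esym f n k"
proof (induction n arbitrary: k)
  case 0
  then show ?case by (cases k) (auto simp: esym_def esym_poly_def)
next
  case (Suc n)
  have "esym_poly f (Suc n) = esym_poly f n * [:1, f n:]"
    by (simp add: esym_poly_def)
  then have "esym f (Suc n) k = (\<Sum>i\<le>k. esym f n i * coeff [:1, f n:] (k - i))"
    unfolding esym_def by (simp only: coeff_mult)
  also have "\<dots> \<ge> 0"
    using Suc by (intro sum_nonneg mult_nonneg_nonneg) (auto simp: coeff_pCons split: nat.split)
  finally show ?case .
qed

text \<open>If \<open>f i < 0\<close>, the polynomial \<open>\<Prod>(1 + f j t)\<close> vanishes at \<open>t = -1 / f i > 0\<close>,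
  while nonnegative coefficients and constant term 1 make it at least 1 there.\<close>
lemma nonneg_if_esym_nonneg:
  assumes "\<And>k. k \<le> n \<Longrightarrow> 0 \<le> esym f n k" and "i < n"
  shows "0 \<le> f i"
proof (rule ccontr)
  assume "\<not> 0 \<le> f i"
  define t where "t = - 1 / f i"
  have t: "t > 0"
    using \<open>\<not> 0 \<le> f i\<close> by (simp add: t_def)
  have "poly (esym_poly f n) t = 0"
    unfolding poly_esym_poly using \<open>i < n\<close> \<open>\<not> 0 \<le> f i\<close>
    by (intro prod_zero bexI[of _ i]) (auto simp: t_def)
  moreover have "1 \<le> poly (esym_poly f n) t"
  proof -
    have "esym f n 0 * t ^ 0 \<le> (\<Sum>k\<le>degree (esym_poly f n). esym f n k * t ^ k)"
    proof (rule member_le_sum)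
      fix k assume "k \<in> {..degree (esym_poly f n)} - {0}"
      then show "0 \<le> esym f n k * t ^ k"
        using assms(1) degree_esym_poly[of f n] t by simp
    qed auto
    then show ?thesis
      by (simp add: poly_altdef flip: esym_def)
  qed
  ultimately show False
    by simp
qed

lemma esym_nonneg_iff: "(\<forall>k\<le>n. 0 \<le> esym f n k) \<longleftrightarrow> (\<forall>i<n. 0 \<le> f i)"
  using esym_nonneg nonneg_if_esym_nonneg by blast

lemma dim_row_adjoint [simp]: "dim_row (adjoint A) = dim_col A"
  and dim_col_adjoint [simp]: "dim_col (adjoint A) = dim_row A"
  by (simp_all add: adjoint_def)

lemma adjoint_carrier_mat [simp]: "A \<in> carrier_mat n m \<Longrightarrow> adjoint A \<in> carrier_mat m n"
  by (simp add: adjoint_def)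

lemma index_adjoint [simp]:
  "i < dim_col A \<Longrightarrow> j < dim_row A \<Longrightarrow> adjoint A $$ (i, j) = cnj (A $$ (j, i))"
  by (simp add: adjoint_def)

lemma adjoint_adjoint [simp]: "adjoint (adjoint A) = A"
  by (rule eq_matI) auto

lemma adjoint_mult:
  "A \<in> carrier_mat n k \<Longrightarrow> B \<in> carrier_mat k m \<Longrightarrow> adjoint (A * B) = adjoint B * adjoint A"
  by (rule eq_matI) (auto simp: scalar_prod_def mult.commute)

lemma adjoint_diff_smult:
  "A \<in> carrier_mat n n \<Longrightarrow> B \<in> carrier_mat n n \<Longrightarrow>
   adjoint (a \<cdot>\<^sub>m A - b \<cdot>\<^sub>m B) = cnj a \<cdot>\<^sub>m adjoint A - cnj b \<cdot>\<^sub>m adjoint B"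
  by (rule eq_matI) auto

lemma quad_form_mult_adjoint:
  assumes "U \<in> carrier_mat n k" "v \<in> carrier_vec n" "x \<in> carrier_vec k"
  shows "conjugate v \<bullet> (U *\<^sub>v x) = conjugate (adjoint U *\<^sub>v v) \<bullet> x"
proof -
  have "conjugate v \<bullet> (U *\<^sub>v x) = (\<Sum>i<n. \<Sum>j<k. cnj (v $ i) * U $$ (i, j) * x $ j)"
    using assms by (simp add: scalar_prod_def lessThan_atLeast0 sum_distrib_left mult.assoc)
  also have "\<dots> = (\<Sum>j<k. \<Sum>i<n. cnj (v $ i) * U $$ (i, j) * x $ j)"
    by (rule sum.swap)
  also have "\<dots> = (\<Sum>j<k. cnj (\<Sum>i<n. cnj (U $$ (i, j)) * v $ i) * x $ j)"
    by (simp add: sum_distrib_left sum_distrib_right mult_ac)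
  also have "\<dots> = conjugate (adjoint U *\<^sub>v v) \<bullet> x"
    using assms by (simp add: scalar_prod_def lessThan_atLeast0)
  finally show ?thesis .
qed

lemma smult_mat_mult_vec: "dim_vec v = dim_col A \<Longrightarrow> (c \<cdot>\<^sub>m A) *\<^sub>v v = c \<cdot>\<^sub>v (A *\<^sub>v v)"
  by (rule eq_vecI) (simp_all add: scalar_prod_def sum_distrib_left mult.assoc)

lemma quad_form_diff_smult:
  fixes a b :: complex
  assumes "A \<in> carrier_mat n n" "B \<in> carrier_mat n n" "v \<in> carrier_vec n"
  shows "conjugate v \<bullet> ((a \<cdot>\<^sub>m A - b \<cdot>\<^sub>m B) *\<^sub>v v) =
    a * (conjugate v \<bullet> (A *\<^sub>v v)) - b * (conjugate v \<bullet> (B *\<^sub>v v))"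
  using assms by (simp add: minus_mult_distrib_mat_vec [of _ n n] scalar_prod_minus_distrib [of _ n]
      smult_mat_mult_vec)

lemma mtrace_mult_comm:
  assumes "A \<in> carrier_mat n m" "B \<in> carrier_mat m n"
  shows "mtrace (A * B) = mtrace (B * A)"
proof -
  have "mtrace (A * B) = (\<Sum>i<n. \<Sum>j<m. A $$ (i, j) * B $$ (j, i))"
    using assms by (simp add: mtrace_def scalar_prod_def lessThan_atLeast0)
  also have "\<dots> = (\<Sum>j<m. \<Sum>i<n. B $$ (j, i) * A $$ (i, j))"
    by (subst sum.swap) (simp add: mult.commute)
  also have "\<dots> = mtrace (B * A)"
    using assms by (simp add: mtrace_def scalar_prod_def lessThan_atLeast0)
  finally show ?thesis .
qed

lemma mtrace_diff_smult:
  "A \<in> carrier_mat n n \<Longrightarrow> B \<in> carrier_mat n n \<Longrightarrow>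
   mtrace (a \<cdot>\<^sub>m A - b \<cdot>\<^sub>m B) = a * mtrace A - b * mtrace B"
  by (simp add: mtrace_def sum_distrib_left sum_subtractf)

lemma square_mult_carrier_mat [simp]:
  "A \<in> carrier_mat n n \<Longrightarrow> B \<in> carrier_mat n n \<Longrightarrow> A * B \<in> carrier_mat n n"
  by (rule mult_carrier_mat)

lemma square_mult_mat_vec_carrier [simp]:
  "A \<in> carrier_mat n n \<Longrightarrow> v \<in> carrier_vec n \<Longrightarrow> A *\<^sub>v v \<in> carrier_vec n"
  by (rule mult_mat_vec_carrier)

lemma complex_of_real_nonneg_iff: "0 \<le> complex_of_real r \<longleftrightarrow> 0 \<le> r"
  by (simp add: less_eq_complex_def)

lemma densityD:
  assumes "\<eta> \<in> density d"
  shows "\<eta> \<in> carrier_mat d d" "adjoint \<eta> = \<eta>" "mtrace \<eta> = 1"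
    and "v \<in> carrier_vec d \<Longrightarrow> 0 \<le> conjugate v \<bullet> (\<eta> *\<^sub>v v)"
  using assms by (auto simp: density_def positive_semidef_def hermitian_def)

definition real_diag_mat :: "nat \<Rightarrow> (nat \<Rightarrow> real) \<Rightarrow> complex mat" where
  "real_diag_mat n \<mu> = mat n n (\<lambda>(i, j). if i = j then complex_of_real (\<mu> i) else 0)"

lemma real_diag_mat_carrier [simp]: "real_diag_mat n \<mu> \<in> carrier_mat n n"
  and dim_row_real_diag_mat [simp]: "dim_row (real_diag_mat n \<mu>) = n"
  and dim_col_real_diag_mat [simp]: "dim_col (real_diag_mat n \<mu>) = n"
  by (simp_all add: real_diag_mat_def)

lemma index_real_diag_mat [simp]:
  "i < n \<Longrightarrow> j < n \<Longrightarrow> real_diag_mat n \<mu> $$ (i, j) = (if i = j then complex_of_real (\<mu> i) else 0)"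
  by (simp add: real_diag_mat_def)

lemma adjoint_real_diag_mat [simp]: "adjoint (real_diag_mat n \<mu>) = real_diag_mat n \<mu>"
  by (rule eq_matI) auto

lemma real_diag_mat_mult:
  "real_diag_mat n \<mu> * real_diag_mat n \<nu> = real_diag_mat n (\<lambda>i. \<mu> i * \<nu> i)"
proof (rule eq_matI)
  fix i j assume "i < dim_row (real_diag_mat n (\<lambda>i. \<mu> i * \<nu> i))"
    "j < dim_col (real_diag_mat n (\<lambda>i. \<mu> i * \<nu> i))"
  then have ij: "i < n" "j < n" by simp_all
  have "(real_diag_mat n \<mu> * real_diag_mat n \<nu>) $$ (i, j) =
      (\<Sum>k\<in>{0..<n}. real_diag_mat n \<mu> $$ (i, k) * real_diag_mat n \<nu> $$ (k, j))"
    using ij by (simp add: scalar_prod_def)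
  also have "\<dots> = (\<Sum>k\<in>{0..<n}. if k = i then real_diag_mat n \<mu> $$ (i, k) * real_diag_mat n \<nu> $$ (k, j) else 0)"
    using ij by (intro sum.cong) auto
  finally show "(real_diag_mat n \<mu> * real_diag_mat n \<nu>) $$ (i, j) =
      real_diag_mat n (\<lambda>i. \<mu> i * \<nu> i) $$ (i, j)"
    using ij by simp
qed simp_all

lemma real_diag_mat_one: "real_diag_mat n (\<lambda>_. 1) = 1\<^sub>m n"
  by (rule eq_matI) auto

lemma real_diag_mat_diff_smult:
  "complex_of_real a \<cdot>\<^sub>m real_diag_mat n \<mu> - complex_of_real b \<cdot>\<^sub>m real_diag_mat n \<nu> =
     real_diag_mat n (\<lambda>i. a * \<mu> i - b * \<nu> i)"
  by (rule eq_matI) auto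

lemma mtrace_real_diag_mat: "mtrace (real_diag_mat n \<mu>) = complex_of_real (\<Sum>i<n. \<mu> i)"
  by (simp add: mtrace_def)

lemma quad_form_real_diag_mat:
  assumes "w \<in> carrier_vec n"
  shows "conjugate w \<bullet> (real_diag_mat n \<mu> *\<^sub>v w) = complex_of_real (\<Sum>i<n. \<mu> i * (cmod (w $ i))\<^sup>2)"
proof -
  have "(real_diag_mat n \<mu> *\<^sub>v w) $ i = complex_of_real (\<mu> i) * w $ i" if "i < n" for i
  proof -
    have "(real_diag_mat n \<mu> *\<^sub>v w) $ i = (\<Sum>k\<in>{0..<n}. real_diag_mat n \<mu> $$ (i, k) * w $ k)"
      using that assms by (simp add: scalar_prod_def)
    also have "\<dots> = (\<Sum>k\<in>{0..<n}. if k = i then complex_of_real (\<mu> i) * w $ k else 0)"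
      using that by (intro sum.cong) auto
    finally show ?thesis
      using that by simp
  qed
  then have "conjugate w \<bullet> (real_diag_mat n \<mu> *\<^sub>v w) =
      (\<Sum>i<n. complex_of_real (\<mu> i) * (w $ i * cnj (w $ i)))"
    using assms by (auto simp: scalar_prod_def lessThan_atLeast0 mult_ac intro: sum.cong)
  also have "\<dots> = (\<Sum>i<n. complex_of_real (\<mu> i * (cmod (w $ i))\<^sup>2))"
    by (simp only: complex_norm_square of_real_mult)
  also have "\<dots> = complex_of_real (\<Sum>i<n. \<mu> i * (cmod (w $ i))\<^sup>2)"
    by simp
  finally show ?thesis .
qed

definition unitary :: "nat \<Rightarrow> complex mat \<Rightarrow> bool" where
  "unitary n U \<longleftrightarrow> U \<in> carrier_mat n n \<and> adjoint U * U = 1\<^sub>m n \<and> U * adjoint U = 1\<^sub>m n"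

lemma unitaryI: "U \<in> carrier_mat n n \<Longrightarrow> adjoint U * U = 1\<^sub>m n \<Longrightarrow> unitary n U"
  unfolding unitary_def using mat_mult_left_right_inverse [of "adjoint U" n U] by auto

lemma unitary_mult: "unitary n U \<Longrightarrow> unitary n V \<Longrightarrow> unitary n (U * V)"
proof -
  assume U: "unitary n U" and V: "unitary n V"
  then have carrier: "U \<in> carrier_mat n n" "adjoint U \<in> carrier_mat n n"
    "V \<in> carrier_mat n n" "adjoint V \<in> carrier_mat n n"
    by (simp_all add: unitary_def)
  have "adjoint (U * V) * (U * V) = adjoint V * ((adjoint U * U) * V)"
    using carrier by (simp add: adjoint_mult [of _ n n _ n] assoc_mult_mat [of _ n n _ n _ n])
  then show ?thesis
    using U V by (intro unitaryI) (auto simp: unitary_def)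
qed

context
  fixes n U
  assumes U: "unitary n U"
begin

lemma unitary_carrier_mat: "U \<in> carrier_mat n n" "adjoint U \<in> carrier_mat n n"
  and adjoint_mult_unitary: "adjoint U * U = 1\<^sub>m n"
  and unitary_mult_adjoint: "U * adjoint U = 1\<^sub>m n"
  using U by (auto simp: unitary_def)

lemma adjoint_unitary_mult_cancel: "X \<in> carrier_mat n n \<Longrightarrow> adjoint U * (U * X) = X"
  using assoc_mult_mat [OF unitary_carrier_mat(2,1), of X n] adjoint_mult_unitary by simp

lemma unitary_mult_adjoint_cancel: "X \<in> carrier_mat n n \<Longrightarrow> U * (adjoint U * X) = X"
  using assoc_mult_mat [OF unitary_carrier_mat(1,2), of X n] unitary_mult_adjoint by simp

lemma mtrace_unitary_conj: "M \<in> carrier_mat n n \<Longrightarrow> mtrace (U * M * adjoint U) = mtrace M"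
  using unitary_carrier_mat mtrace_mult_comm [of "U * M" n n "adjoint U"]
  by (simp add: adjoint_unitary_mult_cancel assoc_mult_mat [of _ n n _ n _ n])

lemma hermitian_unitary_conj: "hermitian n (U * real_diag_mat n \<mu> * adjoint U)"
  using unitary_carrier_mat
  by (simp add: hermitian_def adjoint_mult [of _ n n _ n] assoc_mult_mat [of _ n n _ n _ n])

lemma unitary_conj_pow:
  "(U * real_diag_mat n \<mu> * adjoint U) ^\<^sub>m l = U * real_diag_mat n (\<lambda>i. \<mu> i ^ l) * adjoint U"
proof (induction l)
  case 0
  then show ?case
    using unitary_carrier_mat unitary_mult_adjoint by (simp add: real_diag_mat_one)
next
  case (Suc l)
  moreover have "real_diag_mat n (\<lambda>i. \<mu> i ^ l) * (real_diag_mat n \<mu> * adjoint U) =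
      real_diag_mat n (\<lambda>i. \<mu> i ^ Suc l) * adjoint U"
    using unitary_carrier_mat
    by (simp add: real_diag_mat_mult mult.commute flip: assoc_mult_mat [of _ n n _ n _ n])
  ultimately show ?case
    using unitary_carrier_mat
    by (simp add: assoc_mult_mat [of _ n n _ n _ n] adjoint_unitary_mult_cancel)
qed

lemma mtrace_unitary_conj_pow:
  "mtrace ((U * real_diag_mat n \<mu> * adjoint U) ^\<^sub>m l) = complex_of_real (\<Sum>i<n. \<mu> i ^ l)"
  by (simp add: unitary_conj_pow mtrace_unitary_conj mtrace_real_diag_mat)

lemma unitary_conj_diff_smult:
  "complex_of_real a \<cdot>\<^sub>m (U * real_diag_mat n \<mu> * adjoint U) -
     complex_of_real b \<cdot>\<^sub>m (U * real_diag_mat n \<nu> * adjoint U) =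
   U * real_diag_mat n (\<lambda>i. a * \<mu> i - b * \<nu> i) * adjoint U"
proof -
  let ?D = "\<lambda>\<mu>. real_diag_mat n \<mu>"
  have "U * ?D (\<lambda>i. a * \<mu> i - b * \<nu> i) * adjoint U =
      (U * (complex_of_real a \<cdot>\<^sub>m ?D \<mu>) - U * (complex_of_real b \<cdot>\<^sub>m ?D \<nu>)) * adjoint U"
    using unitary_carrier_mat
    by (simp add: mult_minus_distrib_mat [of _ n n _ n] flip: real_diag_mat_diff_smult)
  also have "\<dots> = complex_of_real a \<cdot>\<^sub>m (U * ?D \<mu> * adjoint U) -
      complex_of_real b \<cdot>\<^sub>m (U * ?D \<nu> * adjoint U)"
    using unitary_carrier_mat
    by (simp add: minus_mult_distrib_mat [of _ n n _ _ n] mult_smult_distrib [of _ n n _ n]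
        mult_smult_assoc_mat [of _ n n _ n])
  finally show ?thesis ..
qed

lemma quad_form_unitary_conj:
  assumes "v \<in> carrier_vec n"
  shows "conjugate v \<bullet> ((U * real_diag_mat n \<mu> * adjoint U) *\<^sub>v v) =
    complex_of_real (\<Sum>i<n. \<mu> i * (cmod ((adjoint U *\<^sub>v v) $ i))\<^sup>2)"
proof -
  have w: "adjoint U *\<^sub>v v \<in> carrier_vec n"
    using unitary_carrier_mat(2) assms by (rule mult_mat_vec_carrier)
  have "(U * real_diag_mat n \<mu> * adjoint U) *\<^sub>v v = U *\<^sub>v (real_diag_mat n \<mu> *\<^sub>v (adjoint U *\<^sub>v v))"
    using assms unitary_carrier_mat
    by (simp add: assoc_mult_mat [of _ n n _ n _ n] assoc_mult_mat_vec [of _ n n _ n])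
  then have "conjugate v \<bullet> ((U * real_diag_mat n \<mu> * adjoint U) *\<^sub>v v) =
      conjugate v \<bullet> (U *\<^sub>v (real_diag_mat n \<mu> *\<^sub>v (adjoint U *\<^sub>v v)))"
    by (rule arg_cong)
  also have "\<dots> = conjugate (adjoint U *\<^sub>v v) \<bullet> (real_diag_mat n \<mu> *\<^sub>v (adjoint U *\<^sub>v v))"
    using assms unitary_carrier_mat mult_mat_vec_carrier [OF real_diag_mat_carrier w]
    by (intro quad_form_mult_adjoint [of U n n]) simp_all
  also have "\<dots> = complex_of_real (\<Sum>i<n. \<mu> i * (cmod ((adjoint U *\<^sub>v v) $ i))\<^sup>2)"
    using w by (rule quad_form_real_diag_mat)
  finally show ?thesis .
qed

lemma positive_semidef_unitary_conj_iff:
  "positive_semidef n (U * real_diag_mat n \<mu> * adjoint U) \<longleftrightarrow> (\<forall>i<n. 0 \<le> \<mu> i)"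
proof
  assume psd: "positive_semidef n (U * real_diag_mat n \<mu> * adjoint U)"
  show "\<forall>i<n. 0 \<le> \<mu> i"
  proof (intro allI impI)
    fix i assume "i < n"
    have "adjoint U *\<^sub>v (U *\<^sub>v unit_vec n i) = unit_vec n i"
      using unitary_carrier_mat adjoint_mult_unitary
      by (simp flip: assoc_mult_mat_vec [of _ n n _ n])
    moreover have "(\<Sum>k<n. \<mu> k * (cmod (unit_vec n i $ k))\<^sup>2) = (\<Sum>k<n. if k = i then \<mu> k else 0)"
      by (rule sum.cong) (auto simp: unit_vec_def)
    moreover have "(\<Sum>k<n. if k = i then \<mu> k else 0) = \<mu> i"
      using \<open>i < n\<close> by simp
    ultimately have "conjugate (U *\<^sub>v unit_vec n i) \<bullet>
        ((U * real_diag_mat n \<mu> * adjoint U) *\<^sub>v (U *\<^sub>v unit_vec n i)) = complex_of_real (\<mu> i)"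
      using unitary_carrier_mat by (simp add: quad_form_unitary_conj)
    moreover have "0 \<le> conjugate (U *\<^sub>v unit_vec n i) \<bullet>
        ((U * real_diag_mat n \<mu> * adjoint U) *\<^sub>v (U *\<^sub>v unit_vec n i))"
      using psd unitary_carrier_mat unfolding positive_semidef_def by simp
    ultimately show "0 \<le> \<mu> i"
      by (simp add: less_eq_complex_def)
  qed
next
  assume "\<forall>i<n. 0 \<le> \<mu> i"
  then have "0 \<le> (\<Sum>i<n. \<mu> i * (cmod ((adjoint U *\<^sub>v v) $ i))\<^sup>2)" for v
    by (intro sum_nonneg) simp
  then show "positive_semidef n (U * real_diag_mat n \<mu> * adjoint U)"
    by (simp add: positive_semidef_def hermitian_unitary_conj quad_form_unitary_conj less_eq_complex_def)
qed

end

subsection \<open>The spectral theorem for Hermitian matrices\<close>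

definition normalize_vec :: "complex vec \<Rightarrow> complex vec" where
  "normalize_vec w = complex_of_real (1 / sqrt (Re (w \<bullet>c w))) \<cdot>\<^sub>v w"

lemma normalize_vec_carrier [simp]: "w \<in> carrier_vec n \<Longrightarrow> normalize_vec w \<in> carrier_vec n"
  by (simp add: normalize_vec_def)

lemma cscalar_prod_of_real_smult:
  "w \<in> carrier_vec n \<Longrightarrow> w' \<in> carrier_vec n \<Longrightarrow>
   (complex_of_real a \<cdot>\<^sub>v w) \<bullet>c (complex_of_real b \<cdot>\<^sub>v w') = complex_of_real (a * b) * (w \<bullet>c w')"
  by (simp add: scalar_prod_def sum_distrib_left mult_ac)

lemma cscalar_prod_normalize_vec:
  "w \<in> carrier_vec n \<Longrightarrow> w' \<in> carrier_vec n \<Longrightarrow> normalize_vec w \<bullet>c normalize_vec w' =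
    complex_of_real (1 / sqrt (Re (w \<bullet>c w)) * (1 / sqrt (Re (w' \<bullet>c w')))) * (w \<bullet>c w')"
  unfolding normalize_vec_def by (rule cscalar_prod_of_real_smult)

lemma normalize_vec_self:
  assumes "w \<in> carrier_vec n" "w \<noteq> 0\<^sub>v n"
  shows "normalize_vec w \<bullet>c normalize_vec w = 1"
proof -
  have "w \<bullet>c w > 0"
    using assms conjugate_square_greater_0_vec by blast
  then have "Re (w \<bullet>c w) > 0" and "w \<bullet>c w = complex_of_real (Re (w \<bullet>c w))"
    by (auto simp: less_complex_def complex_eq_iff)
  then show ?thesis
    using assms by (simp add: cscalar_prod_normalize_vec [of _ n] real_sqrt_mult [symmetric])
qed

lemma unitary_mat_of_cols:
  assumes "set ws \<subseteq> carrier_vec n" "length ws = n"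
    and orthonormal: "\<And>i j. i < n \<Longrightarrow> j < n \<Longrightarrow> ws ! i \<bullet>c ws ! j = of_bool (i = j)"
  shows "unitary n (mat_of_cols n ws)"
proof (rule unitaryI)
  show "mat_of_cols n ws \<in> carrier_mat n n"
    using assms(2) mat_of_cols_carrier(1) [of n ws] by simp
  show "adjoint (mat_of_cols n ws) * mat_of_cols n ws = 1\<^sub>m n"
  proof (rule eq_matI)
    fix i j assume "i < dim_row (1\<^sub>m n)" "j < dim_col (1\<^sub>m n)"
    then have ij: "i < n" "j < n" by simp_all
    then have carrier: "ws ! i \<in> carrier_vec n" "ws ! j \<in> carrier_vec n"
      using assms(1,2) by auto
    have "(adjoint (mat_of_cols n ws) * mat_of_cols n ws) $$ (i, j) =
        (\<Sum>k\<in>{0..<n}. ws ! j $ k * cnj (ws ! i $ k))"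
      using ij assms(2) by (simp add: scalar_prod_def mat_of_cols_index mult.commute)
    also have "\<dots> = ws ! j \<bullet>c ws ! i"
      using carrier by (simp add: scalar_prod_def)
    finally show "(adjoint (mat_of_cols n ws) * mat_of_cols n ws) $$ (i, j) = 1\<^sub>m n $$ (i, j)"
      using ij orthonormal by auto
  qed (use assms(2) in simp_all)
qed

lemma corthogonal_normalize_vec:
  assumes "corthogonal ws" "set ws \<subseteq> carrier_vec n" "i < length ws" "j < length ws"
  shows "normalize_vec (ws ! i) \<bullet>c normalize_vec (ws ! j) = of_bool (i = j)"
proof (cases "i = j")
  case True
  have "ws ! i \<in> carrier_vec n" "ws ! i \<noteq> 0\<^sub>v n"
    using assms(2,3) nth_mem corthogonalD [OF assms(1,3,3)] by auto
  then show ?thesis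
    using True normalize_vec_self [of "ws ! i" n] by simp
next
  case False
  moreover have "ws ! i \<in> carrier_vec n" "ws ! j \<in> carrier_vec n"
    using assms(2-4) nth_mem by auto
  ultimately show ?thesis
    using corthogonalD [OF assms(1,3,4)] by (simp add: cscalar_prod_normalize_vec [of _ n])
qed

lemma unitary_completion:
  assumes u: "u \<in> carrier_vec n" and "u \<bullet>c u = 1"
  shows "\<exists>W. unitary n W \<and> col W 0 = u"
proof -
  have "u \<noteq> 0\<^sub>v n"
    using assms by auto
  have "n > 0"
    using assms by (cases n) (auto simp: scalar_prod_def)
  interpret cof_vec_space n "TYPE(complex)" .
  obtain b where b: "set b \<subseteq> carrier_vec n" "distinct b" "\<not> lin_dep (set b)" "length b = n"
    "hd b = u"
    using basis_completion [OF u \<open>u \<noteq> 0\<^sub>v n\<close>] by blast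
  with \<open>n > 0\<close> obtain vs where b_def: "b = u # vs"
    by (cases b) auto
  define ws where "ws = gram_schmidt n b"
  have ws: "corthogonal ws" "set ws \<subseteq> carrier_vec n" "length ws = n"
    using gram_schmidt_result [OF b(1-3) ws_def] b(4) by auto
  have "ws ! 0 = u"
    using gram_schmidt_hd [OF u, of vs] ws(3) \<open>n > 0\<close> by (cases ws) (auto simp: ws_def b_def)
  define W where "W = mat_of_cols n (map normalize_vec ws)"
  have "unitary n W"
    unfolding W_def using ws corthogonal_normalize_vec [OF ws(1,2)]
    by (intro unitary_mat_of_cols) auto
  moreover have "col W 0 = u"
    using \<open>ws ! 0 = u\<close> \<open>n > 0\<close> ws \<open>u \<bullet>c u = 1\<close> u by (auto simp: W_def normalize_vec_def)
  ultimately show ?thesis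
    by blast
qed

lemma unit_eigenvector_exists:
  fixes A :: "complex mat"
  assumes "A \<in> carrier_mat n n" "n > 0"
  obtains e u where "u \<in> carrier_vec n" "u \<bullet>c u = 1" "A *\<^sub>v u = e \<cdot>\<^sub>v u"
proof -
  obtain e where "e \<in> spectrum A"
    using spectrum_non_empty [OF assms] by blast
  then obtain v where v: "v \<in> carrier_vec n" "v \<noteq> 0\<^sub>v n" "A *\<^sub>v v = e \<cdot>\<^sub>v v"
    using assms(1) by (auto simp: spectrum_def eigenvalue_def eigenvector_def)
  have "A *\<^sub>v normalize_vec v = e \<cdot>\<^sub>v normalize_vec v"
    using assms(1) v by (simp add: normalize_vec_def mult_mat_vec smult_smult_assoc mult.commute)
  then show ?thesis
    using that normalize_vec_self [OF v(1,2)] normalize_vec_carrier [OF v(1)] by blast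
qed

definition scalar_block_diag :: "complex \<Rightarrow> complex mat \<Rightarrow> complex mat" where
  "scalar_block_diag c X = four_block_mat (c \<cdot>\<^sub>m 1\<^sub>m 1) (0\<^sub>m 1 (dim_col X)) (0\<^sub>m (dim_row X) 1) X"

lemma dim_row_scalar_block_diag [simp]: "dim_row (scalar_block_diag c X) = Suc (dim_row X)"
  and dim_col_scalar_block_diag [simp]: "dim_col (scalar_block_diag c X) = Suc (dim_col X)"
  by (simp_all add: scalar_block_diag_def)

lemma scalar_block_diag_carrier [simp]:
  "X \<in> carrier_mat m m \<Longrightarrow> scalar_block_diag c X \<in> carrier_mat (Suc m) (Suc m)"
  using carrier_matD [of X m m] by (intro carrier_matI) simp_all

lemma index_scalar_block_diag:
  "i < Suc (dim_row X) \<Longrightarrow> j < Suc (dim_col X) \<Longrightarrow> scalar_block_diag c X $$ (i, j) =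
    (if i = 0 \<or> j = 0 then (if i = j then c else 0) else X $$ (i - 1, j - 1))"
  by (simp add: scalar_block_diag_def)

lemma scalar_block_diag_mult:
  assumes "X \<in> carrier_mat m m" "Y \<in> carrier_mat m m"
  shows "scalar_block_diag a X * scalar_block_diag b Y = scalar_block_diag (a * b) (X * Y)"
proof -
  have dims: "dim_row X = m" "dim_col X = m" "dim_row Y = m" "dim_col Y = m"
    using assms by auto
  show ?thesis
    unfolding scalar_block_diag_def dims
    using assms
    by (subst mult_four_block_mat [of _ 1 1 _ m _ m _ _ 1 _ m])
      (auto intro!: cong_four_block_mat eq_matI simp: scalar_prod_def)
qed

lemma adjoint_scalar_block_diag:
  "X \<in> carrier_mat m m \<Longrightarrow> adjoint (scalar_block_diag c X) = scalar_block_diag (cnj c) (adjoint X)"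
  by (rule eq_matI) (auto simp: index_scalar_block_diag)

lemma scalar_block_diag_one: "scalar_block_diag 1 (1\<^sub>m m) = 1\<^sub>m (Suc m)"
  by (rule eq_matI) (auto simp: index_scalar_block_diag)

lemma real_diag_mat_Suc:
  "real_diag_mat (Suc m) \<mu> = scalar_block_diag (complex_of_real (\<mu> 0)) (real_diag_mat m (\<lambda>i. \<mu> (Suc i)))"
  by (rule eq_matI) (auto simp: index_scalar_block_diag)

lemma unitary_scalar_block_diag: "unitary m U \<Longrightarrow> unitary (Suc m) (scalar_block_diag 1 U)"
  by (intro unitaryI) (simp_all add: unitary_def adjoint_scalar_block_diag [of _ m]
      scalar_block_diag_mult [of _ m] scalar_block_diag_one)

lemma hermitian_block_if_eigenvector_unit_vec:
  assumes B: "B \<in> carrier_mat (Suc m) (Suc m)" "adjoint B = B"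
    and eigen: "B *\<^sub>v unit_vec (Suc m) 0 = e \<cdot>\<^sub>v unit_vec (Suc m) 0"
  obtains r B' where "B = scalar_block_diag (complex_of_real r) B'"
    and "B' \<in> carrier_mat m m" "adjoint B' = B'"
proof -
  define B' where "B' = mat m m (\<lambda>(i, j). B $$ (Suc i, Suc j))"
  have first_col: "B $$ (i, 0) = (if i = 0 then e else 0)" if "i < Suc m" for i
  proof -
    have "B $$ (i, 0) = (B *\<^sub>v unit_vec (Suc m) 0) $ i"
      using that B(1) by simp
    then show ?thesis
      using that by (simp add: eigen)
  qed
  have first_row: "B $$ (0, j) = (if j = 0 then cnj e else 0)" if "j < Suc m" for j
    using first_col [OF that] B(1) that by (subst B(2) [symmetric]) simp
  have "cnj e = e"
    using first_row [of 0] first_col [of 0] by simp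
  then have "e = complex_of_real (Re e)"
    by (simp add: complex_eq_iff)
  show thesis
  proof (rule that)
    show "B = scalar_block_diag (complex_of_real (Re e)) B'"
      using B(1) first_col first_row \<open>cnj e = e\<close> \<open>e = complex_of_real (Re e)\<close>
      by (intro eq_matI) (auto simp: B'_def index_scalar_block_diag)
    show "B' \<in> carrier_mat m m"
      by (simp add: B'_def)
    show "adjoint B' = B'"
    proof (rule eq_matI)
      fix i j assume "i < dim_row B'" "j < dim_col B'"
      moreover from this have "B $$ (Suc i, Suc j) = cnj (B $$ (Suc j, Suc i))"
        using B(1) by (subst B(2) [symmetric]) (simp add: B'_def)
      ultimately show "adjoint B' $$ (i, j) = B' $$ (i, j)"
        by (simp add: B'_def)
    qed (simp_all add: B'_def)
  qed
qed

lemma hermitian_unitary_deflation: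
  assumes A: "A \<in> carrier_mat (Suc m) (Suc m)" "adjoint A = A"
    and W: "unitary (Suc m) W" and eigen: "A *\<^sub>v col W 0 = e \<cdot>\<^sub>v col W 0"
  obtains r A' where "adjoint W * A * W = scalar_block_diag (complex_of_real r) A'"
    and "A' \<in> carrier_mat m m" "adjoint A' = A'"
proof (rule hermitian_block_if_eigenvector_unit_vec)
  note W_carrier = unitary_carrier_mat [OF W]
  show "adjoint W * A * W \<in> carrier_mat (Suc m) (Suc m)"
    using A W_carrier by simp
  show "adjoint (adjoint W * A * W) = adjoint W * A * W"
    using A W_carrier by (simp add: adjoint_mult [of _ "Suc m" "Suc m" _ "Suc m"]
        assoc_mult_mat [of _ "Suc m" "Suc m" _ "Suc m" _ "Suc m"])
  have W0: "W *\<^sub>v unit_vec (Suc m) 0 = col W 0"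
    using W_carrier by (intro eq_vecI) simp_all
  have "col W 0 \<in> carrier_vec (Suc m)"
    using W_carrier by (simp add: carrier_vecI)
  then have "(adjoint W * A * W) *\<^sub>v unit_vec (Suc m) 0 =
      adjoint W *\<^sub>v (e \<cdot>\<^sub>v (W *\<^sub>v unit_vec (Suc m) 0))"
    using A W_carrier eigen by (simp add: W0 assoc_mult_mat_vec [of _ "Suc m" "Suc m" _ "Suc m"])
  also have "\<dots> = e \<cdot>\<^sub>v unit_vec (Suc m) 0"
    using W_carrier adjoint_mult_unitary [OF W]
    by (simp add: mult_mat_vec [of _ "Suc m" "Suc m"] flip: assoc_mult_mat_vec [of _ "Suc m" "Suc m" _ "Suc m"])
  finally show "(adjoint W * A * W) *\<^sub>v unit_vec (Suc m) 0 = e \<cdot>\<^sub>v unit_vec (Suc m) 0" .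
qed

theorem hermitian_unitary_diagonalization:
  assumes "A \<in> carrier_mat n n" "adjoint A = A"
  shows "\<exists>U \<mu>. unitary n U \<and> A = U * real_diag_mat n \<mu> * adjoint U"
  using assms
proof (induction n arbitrary: A)
  case 0
  then have "unitary 0 (1\<^sub>m 0) \<and> A = 1\<^sub>m 0 * real_diag_mat 0 (\<lambda>_. 0) * adjoint (1\<^sub>m 0)"
    by (auto simp: unitary_def intro: eq_matI)
  then show ?case
    by blast
next
  case (Suc m A)
  obtain e u where u: "u \<in> carrier_vec (Suc m)" "u \<bullet>c u = 1" and "A *\<^sub>v u = e \<cdot>\<^sub>v u"
    using unit_eigenvector_exists [OF Suc.prems(1)] by blast
  moreover obtain W where W: "unitary (Suc m) W" and "col W 0 = u"
    using unitary_completion [OF u] by blast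
  ultimately obtain r A3 where block: "adjoint W * A * W = scalar_block_diag (complex_of_real r) A3"
    and "A3 \<in> carrier_mat m m" "adjoint A3 = A3"
    using hermitian_unitary_deflation [OF Suc.prems W] by metis
  then obtain U3 \<mu>3 where U3: "unitary m U3" and A3: "A3 = U3 * real_diag_mat m \<mu>3 * adjoint U3"
    using Suc.IH by blast
  define V where "V = scalar_block_diag 1 U3"
  define \<mu> where "\<mu> i = (if i = 0 then r else \<mu>3 (i - 1))" for i
  have V: "unitary (Suc m) V"
    using U3 by (simp add: V_def unitary_scalar_block_diag)
  have "adjoint W * A * W = V * real_diag_mat (Suc m) \<mu> * adjoint V"
    using unitary_carrier_mat [OF U3]
    by (simp add: block A3 V_def \<mu>_def real_diag_mat_Suc adjoint_scalar_block_diag [of _ m]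
        scalar_block_diag_mult [of _ m])
  moreover have "A = W * (adjoint W * A * W) * adjoint W"
    using Suc.prems(1) unitary_carrier_mat [OF W]
    by (simp add: assoc_mult_mat [of _ "Suc m" "Suc m" _ "Suc m" _ "Suc m"]
        unitary_mult_adjoint [OF W] unitary_mult_adjoint_cancel [OF W])
  ultimately have "A = W * V * real_diag_mat (Suc m) \<mu> * adjoint (W * V)"
    using unitary_carrier_mat [OF W] unitary_carrier_mat [OF V]
    by (simp add: adjoint_mult [of _ "Suc m" "Suc m" _ "Suc m"]
        assoc_mult_mat [of _ "Suc m" "Suc m" _ "Suc m" _ "Suc m"])
  then show ?case
    using unitary_mult [OF W V] by blast
qed

subsection \<open>The functions \<open>S\<^sub>m\<close> detect positive semidefiniteness\<close>

lemma S_eq_esym: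
  assumes "\<And>l. 1 \<le> l \<Longrightarrow> mtrace (X ^\<^sub>m l) = complex_of_real (power_sum f n l)"
  shows "S X m = complex_of_real (esym f n m)"
proof (induction m rule: less_induct)
  case (less m)
  show ?case
  proof (cases m)
    case 0
    then show ?thesis by simp
  next
    case (Suc k)
    have "S X (Suc k) = 1 / of_nat (Suc k) *
        (\<Sum>l = 1..Suc k. complex_of_real ((-1) ^ (l - 1) * power_sum f n l * esym f n (Suc k - l)))"
      using less Suc assms by (simp del: of_nat_Suc)
    also have "\<dots> = complex_of_real (1 / of_nat (Suc k) * (of_nat (Suc k) * esym f n (Suc k)))"
      unfolding newton_identity by simp
    also have "\<dots> = complex_of_real (esym f n (Suc k))"
      by (simp del: of_nat_Suc)
    finally show ?thesis
      using Suc by simp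
  qed
qed

theorem S_nonneg_iff_positive_semidef:
  assumes "hermitian d X" "mtrace X = 1"
  shows "(\<forall>m\<in>{2..d}. 0 \<le> S X m) \<longleftrightarrow> positive_semidef d X"
proof -
  obtain U \<mu> where U: "unitary d U" and X: "X = U * real_diag_mat d \<mu> * adjoint U"
    using hermitian_unitary_diagonalization assms(1) unfolding hermitian_def by blast
  have S_X: "S X m = complex_of_real (esym \<mu> d m)" for m
    by (rule S_eq_esym) (simp add: X mtrace_unitary_conj_pow [OF U] power_sum_def)
  have "esym \<mu> d 1 = 1"
    using S_X [of 1] assms(2) by simp
  have "(\<forall>m\<in>{2..d}. 0 \<le> S X m) \<longleftrightarrow> (\<forall>k\<in>{2..d}. 0 \<le> esym \<mu> d k)"
    by (simp add: S_X less_eq_complex_def)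
  also have "\<dots> \<longleftrightarrow> (\<forall>k\<le>d. 0 \<le> esym \<mu> d k)"
  proof
    assume nonneg: "\<forall>k\<in>{2..d}. 0 \<le> esym \<mu> d k"
    show "\<forall>k\<le>d. 0 \<le> esym \<mu> d k"
    proof (intro allI impI)
      fix k assume "k \<le> d"
      then show "0 \<le> esym \<mu> d k"
        using nonneg \<open>esym \<mu> d 1 = 1\<close> by (cases "k < 2") (auto simp: numeral_2_eq_2 less_Suc_eq)
    qed
  qed simp
  also have "\<dots> \<longleftrightarrow> (\<forall>i<d. 0 \<le> \<mu> i)"
    by (rule esym_nonneg_iff)
  also have "\<dots> \<longleftrightarrow> positive_semidef d X"
    unfolding X by (rule positive_semidef_unitary_conj_iff [OF U, symmetric])
  finally show ?thesis .
qed

subsection \<open>Extrapolation from \<open>\<rho>\<close> through \<open>\<eta>\<close>\<close>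

definition extrapolate :: "real \<Rightarrow> complex mat \<Rightarrow> complex mat \<Rightarrow> complex mat" where
  "extrapolate t \<rho> \<eta> = complex_of_real ((1 + t) / t) \<cdot>\<^sub>m \<eta> - complex_of_real (1 / t) \<cdot>\<^sub>m \<rho>"

lemma hermitian_extrapolate:
  assumes "\<eta> \<in> density d" "\<rho> \<in> density d"
  shows "hermitian d (extrapolate t \<rho> \<eta>)"
  using densityD [OF assms(1)] densityD [OF assms(2)]
  by (simp add: hermitian_def extrapolate_def adjoint_diff_smult [of _ d] minus_carrier_mat)

lemma mtrace_extrapolate:
  assumes "\<eta> \<in> density d" "\<rho> \<in> density d" "t \<noteq> 0"
  shows "mtrace (extrapolate t \<rho> \<eta>) = 1"
proof -
  have "mtrace (extrapolate t \<rho> \<eta>) = complex_of_real ((1 + t) / t - 1 / t)"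
    using densityD [OF assms(1)] densityD [OF assms(2)] by (simp add: extrapolate_def mtrace_diff_smult [of _ d])
  also have "(1 + t) / t - 1 / t = 1"
    using assms(3) by (simp add: field_simps)
  finally show ?thesis
    by simp
qed

lemma extrapolation_nonneg_mono:
  fixes x y s s' :: real
  assumes "0 < s'" "s' \<le> s" "0 \<le> x" "0 \<le> (1 + s') / s' * x - 1 / s' * y"
  shows "0 \<le> (1 + s) / s * x - 1 / s * y"
proof -
  have "(1 + t) / t * x - 1 / t * y = ((1 + t) * x - y) / t" if "t > 0" for t
    using that by (simp add: field_simps)
  moreover have "(1 + s') * x - y \<le> (1 + s) * x - y"
    using assms(2,3) by (simp add: mult_right_mono)
  ultimately show ?thesis
    using assms by (simp add: zero_le_divide_iff)
qed

lemma positive_semidef_extrapolate_mono: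
  assumes \<eta>: "\<eta> \<in> density d" and \<rho>: "\<rho> \<in> density d" and "0 < s'" "s' \<le> s"
    and psd: "positive_semidef d (extrapolate s' \<rho> \<eta>)"
  shows "positive_semidef d (extrapolate s \<rho> \<eta>)"
  unfolding positive_semidef_def
proof (intro conjI ballI hermitian_extrapolate [OF \<eta> \<rho>])
  fix v :: "complex vec" assume v: "v \<in> carrier_vec d"
  define x where "x = Re (conjugate v \<bullet> (\<eta> *\<^sub>v v))"
  define y where "y = Re (conjugate v \<bullet> (\<rho> *\<^sub>v v))"
  have real_nonneg: "c = complex_of_real (Re c)" "0 \<le> Re c" if "0 \<le> c" for c :: complex
    using that by (simp_all add: less_eq_complex_def complex_eq_iff)
  have "0 \<le> x"
    using real_nonneg (2) [OF densityD(4) [OF \<eta> v]] by (simp add: x_def)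
  have quad_form: "conjugate v \<bullet> (extrapolate t \<rho> \<eta> *\<^sub>v v) =
      complex_of_real ((1 + t) / t * x - 1 / t * y)" for t
  proof -
    have "conjugate v \<bullet> (extrapolate t \<rho> \<eta> *\<^sub>v v) =
        complex_of_real ((1 + t) / t) * (conjugate v \<bullet> (\<eta> *\<^sub>v v)) -
        complex_of_real (1 / t) * (conjugate v \<bullet> (\<rho> *\<^sub>v v))"
      unfolding extrapolate_def
      using densityD(1) [OF \<eta>] densityD(1) [OF \<rho>] v by (rule quad_form_diff_smult)
    also have "\<dots> = complex_of_real ((1 + t) / t * x - 1 / t * y)"
      using real_nonneg (1) [OF densityD(4) [OF \<eta> v]] real_nonneg (1) [OF densityD(4) [OF \<rho> v]]
      by (simp add: x_def y_def)
    finally show ?thesis .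
  qed
  have "0 \<le> conjugate v \<bullet> (extrapolate s' \<rho> \<eta> *\<^sub>v v)"
    using psd v unfolding positive_semidef_def by blast
  then have "0 \<le> (1 + s') / s' * x - 1 / s' * y"
    by (simp only: quad_form complex_of_real_nonneg_iff)
  then show "0 \<le> conjugate v \<bullet> (extrapolate s \<rho> \<eta> *\<^sub>v v)"
    unfolding quad_form complex_of_real_nonneg_iff
    by (rule extrapolation_nonneg_mono [OF \<open>0 < s'\<close> \<open>s' \<le> s\<close> \<open>0 \<le> x\<close>])
qed

lemma density_diagonalization:
  assumes \<rho>: "\<rho> \<in> density d"
  obtains U \<nu> where "unitary d U" "\<rho> = U * real_diag_mat d \<nu> * adjoint U"
    "\<And>i. i < d \<Longrightarrow> 0 \<le> \<nu> i" "(\<Sum>i<d. \<nu> i) = 1"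
proof -
  obtain U \<nu> where U: "unitary d U" and \<rho>_eq: "\<rho> = U * real_diag_mat d \<nu> * adjoint U"
    using hermitian_unitary_diagonalization densityD(1,2) [OF \<rho>] by blast
  moreover have "\<forall>i<d. 0 \<le> \<nu> i"
    using \<rho> by (simp add: \<rho>_eq density_def positive_semidef_unitary_conj_iff [OF U])
  moreover have "complex_of_real (\<Sum>i<d. \<nu> i) = 1"
    using densityD(3) [OF \<rho>] mtrace_unitary_conj [OF U]
    by (simp add: \<rho>_eq mtrace_real_diag_mat del: of_real_sum)
  ultimately show thesis
    using that by (simp only: of_real_eq_1_iff)
qed

lemma witness_extrapolation_coefficients:
  fixes \<nu> :: "nat \<Rightarrow> real" and s s' :: real and j :: nat
  assumes "0 < s'" "s' < s"
  defines "\<mu> \<equiv> \<lambda>i. (\<nu> i + (if i = j then s else 0)) / (1 + s)"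
  shows "(1 + s) / s * \<mu> i - 1 / s * \<nu> i = (if i = j then 1 else 0)"
    and "k \<noteq> j \<Longrightarrow> 0 < \<nu> k \<Longrightarrow> (1 + s') / s' * \<mu> k - 1 / s' * \<nu> k < 0"
proof -
  have "(1 + s) / s * (x / (1 + s)) - 1 / s * y = (x - y) / s" for x y
    using assms(1,2) by (simp add: diff_divide_distrib)
  then show "(1 + s) / s * \<mu> i - 1 / s * \<nu> i = (if i = j then 1 else 0)"
    using assms(1,2) by (simp add: \<mu>_def)
  assume "k \<noteq> j" "0 < \<nu> k"
  then have "(1 + s') / s' * \<mu> k = (1 + s') / (1 + s) * (\<nu> k / s')"
    by (simp add: \<mu>_def)
  also have "\<dots> < 1 * (\<nu> k / s')"
    using \<open>0 < \<nu> k\<close> assms(1,2) by (intro mult_strict_right_mono) simp_all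
  finally show "(1 + s') / s' * \<mu> k - 1 / s' * \<nu> k < 0"
    by simp
qed

text \<open>The witness is \<open>\<eta> = (\<rho> + s \<sigma>) / (1 + s)\<close>, where \<open>\<sigma>\<close> is the projection onto an
  eigenvector of \<open>\<rho>\<close> orthogonal to one with positive eigenvalue; then
  \<open>extrapolate s \<rho> \<eta> = \<sigma>\<close>.\<close>
lemma density_separating_extrapolations:
  assumes \<rho>: "\<rho> \<in> density d" and "2 \<le> d" "0 < s'" "s' < s"
  obtains \<eta> where "\<eta> \<in> density d" "positive_semidef d (extrapolate s \<rho> \<eta>)"
    "\<not> positive_semidef d (extrapolate s' \<rho> \<eta>)"
proof -
  obtain U \<nu> where U: "unitary d U" and \<rho>_eq: "\<rho> = U * real_diag_mat d \<nu> * adjoint U"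
    and \<nu>_nonneg: "\<And>i. i < d \<Longrightarrow> 0 \<le> \<nu> i" and "(\<Sum>i<d. \<nu> i) = 1"
    using density_diagonalization [OF \<rho>] by blast
  obtain k where k: "k < d" "0 < \<nu> k"
    using sum_nonpos [of "{..<d}" \<nu>] \<open>(\<Sum>i<d. \<nu> i) = 1\<close> by (force simp: not_less)
  have "0 < s"
    using \<open>0 < s'\<close> \<open>s' < s\<close> by simp
  define j where "j = (if k = 0 then 1 else 0 :: nat)"
  have j: "j < d" "j \<noteq> k"
    using \<open>2 \<le> d\<close> k by (auto simp: j_def)
  define \<mu> where "\<mu> = (\<lambda>i. (\<nu> i + (if i = j then s else 0)) / (1 + s))"
  define \<eta> where "\<eta> = U * real_diag_mat d \<mu> * adjoint U"
  have extrapolate_\<eta>: "extrapolate t \<rho> \<eta> =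
      U * real_diag_mat d (\<lambda>i. (1 + t) / t * \<mu> i - 1 / t * \<nu> i) * adjoint U" for t
    unfolding extrapolate_def \<eta>_def \<rho>_eq by (rule unitary_conj_diff_smult [OF U])
  show thesis
  proof (rule that)
    have "(\<Sum>i<d. \<mu> i) = ((\<Sum>i<d. \<nu> i) + s) / (1 + s)"
      using j by (simp add: \<mu>_def sum.distrib flip: sum_divide_distrib)
    then have "mtrace \<eta> = 1"
      using \<open>(\<Sum>i<d. \<nu> i) = 1\<close> \<open>0 < s\<close>
      by (simp add: \<eta>_def mtrace_unitary_conj [OF U] mtrace_real_diag_mat)
    moreover have "positive_semidef d \<eta>"
      using \<nu>_nonneg \<open>0 < s\<close>
      by (simp add: \<eta>_def positive_semidef_unitary_conj_iff [OF U] \<mu>_def)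
    ultimately show "\<eta> \<in> density d"
      by (simp add: density_def)
    show "positive_semidef d (extrapolate s \<rho> \<eta>)"
      using witness_extrapolation_coefficients(1) [OF \<open>0 < s'\<close> \<open>s' < s\<close>]
      by (simp add: extrapolate_\<eta> positive_semidef_unitary_conj_iff [OF U] \<mu>_def)
    show "\<not> positive_semidef d (extrapolate s' \<rho> \<eta>)"
      using witness_extrapolation_coefficients(2) [OF \<open>0 < s'\<close> \<open>s' < s\<close> j(2) k(2)] k(1)
      by (auto simp: extrapolate_\<eta> positive_semidef_unitary_conj_iff [OF U] \<mu>_def not_le)
  qed
qed

theorem proposition5:
  fixes d :: nat and F :: "complex mat set" and \<rho> :: "complex mat"
    and W :: "nat \<Rightarrow> real \<Rightarrow> complex mat" and s s' :: real
  assumes "d \<ge> 2"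
    and "F \<subseteq> density d" and "closed_mat_set d F"
    and "\<rho> \<in> density d" and "\<rho> \<notin> F"
    and W: "\<And>t m. t > 0 \<Longrightarrow> m \<in> {2..d} \<Longrightarrow>
              hermitian (d ^ m) (W m t) \<and>
              (\<forall>\<eta> \<in> density d. mtrace (W m t * tensor_pow \<eta> m) =
                 S (complex_of_real ((1 + t) / t) \<cdot>\<^sub>m \<eta> - complex_of_real (1 / t) \<cdot>\<^sub>m \<rho>) m)"
    and "0 < s'" and "s' < s"
  shows "{\<eta> \<in> density d. \<forall>m \<in> {2..d}. 0 \<le> mtrace (W m s' * tensor_pow \<eta> m)}
         \<subset> {\<eta> \<in> density d. \<forall>m \<in> {2..d}. 0 \<le> mtrace (W m s * tensor_pow \<eta> m)}"
proof -
  have witness_set: "{\<eta> \<in> density d. \<forall>m \<in> {2..d}. 0 \<le> mtrace (W m t * tensor_pow \<eta> m)} =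
      {\<eta> \<in> density d. positive_semidef d (extrapolate t \<rho> \<eta>)}" if "0 < t" for t
  proof -
    have "(\<forall>m \<in> {2..d}. 0 \<le> mtrace (W m t * tensor_pow \<eta> m)) \<longleftrightarrow>
        positive_semidef d (extrapolate t \<rho> \<eta>)" if "\<eta> \<in> density d" for \<eta>
      using W [OF \<open>0 < t\<close>] that S_nonneg_iff_positive_semidef [OF hermitian_extrapolate
          [OF that \<open>\<rho> \<in> density d\<close>] mtrace_extrapolate [OF that \<open>\<rho> \<in> density d\<close>]] \<open>0 < t\<close>
      by (simp add: extrapolate_def)
    then show ?thesis
      by blast
  qed
  obtain \<eta> where "\<eta> \<in> density d" "positive_semidef d (extrapolate s \<rho> \<eta>)"
    "\<not> positive_semidef d (extrapolate s' \<rho> \<eta>)"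
    using density_separating_extrapolations [OF \<open>\<rho> \<in> density d\<close> \<open>d \<ge> 2\<close> \<open>0 < s'\<close> \<open>s' < s\<close>] .
  moreover have "0 < s"
    using \<open>0 < s'\<close> \<open>s' < s\<close> by simp
  ultimately show ?thesis
    unfolding witness_set [OF \<open>0 < s'\<close>] witness_set [OF \<open>0 < s\<close>]
    using positive_semidef_extrapolate_mono [OF _ \<open>\<rho> \<in> density d\<close> \<open>0 < s'\<close>] \<open>s' < s\<close>
    by fastforce
qed

end
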